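(* Let $X=(X,d,\mathcal M,\mu)$ be a metric measure space and $1\le p<\infty$. Let $a\in X_0$ be such that for every $\lambda>0$, $B(a,\lambda)\in\mathcal M$ and $\mu(B(a,\lambda))>0$, and $\mu(B(a,\lambda'))<\infty$ for some $\lambda'>0$. Suppose that $A\subset L^p(X)$ and $\xi:A\to(0,\infty)$ is a function such that every $f\in A$ satisfies $f(x)=0$ for almost every $x\in B(a,\xi(f))$, and that $B$ is a $Z$-set in $L^p(X)$. If $A\cup B$ is closed in $L^p(X)$, then $A\cup B$ is a $Z$-set in $L^p(X)$.
   Context: A metric measure space $X=(X,d,\mathcal M,\mu)$ consists of a metric space $(X,d)$, a $\sigma$-algebra $\mathcal M$ and a measure $\mu$ on $\mathcal M$. $X_0=\{x\in X:\{x\}\in\mathcal M,\ \mu(\{x\})=0\}$, $B(a,\lambda)=\{x:d(a,x)<\lambda\}$. $L^p(X)$ is the Banach space of $\mathcal M$-measurable $f:X\to\mathbb R$ with $\|f\|_p=(\int_X|f|^pd\mu)^{1/p}<\infty$, modulo a.e. equality. For maps $f,g:Z\to M$ and an open cover $\mathcal U$ of $M$, $f$ is $\mathcal U$-close to $g$ if for each $z$ some $U\in\mathcal U$ contains $\{f(z),g(z)\}$. A closed set $A$ in a space $M$ is a $Z$-set if for every open cover $\mathcal U$ of $M$ there is a continuous $f:M\to M$ that is $\mathcal U$-close to the identity with $f(M)\cap A=\emptyset$. *)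

theory Defs
  imports "HOL-Analysis.Analysis"
begin

definition Z_set :: "'b topology \<Rightarrow> 'b set \<Rightarrow> bool" where
  "Z_set T A \<longleftrightarrow> closedin T A \<and>
     (\<forall>\<U>. (\<forall>U\<in>\<U>. openin T U) \<and> \<Union>\<U> = topspace T \<longrightarrow>
        (\<exists>f. continuous_map T T f \<and>
             (\<forall>z\<in>topspace T. \<exists>U\<in>\<U>. f z \<in> U \<and> z \<in> U) \<and>
             f ` topspace T \<inter> A = {}))"

definition Lp_fun :: "'a measure \<Rightarrow> real \<Rightarrow> ('a \<Rightarrow> real) set" where
  "Lp_fun M p = {f. f \<in> borel_measurable M \<and> integrable M (\<lambda>x. \<bar>f x\<bar> powr p)}"

definition Lp_norm :: "'a measure \<Rightarrow> real \<Rightarrow> ('a \<Rightarrow> real) \<Rightarrow> real" where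
  "Lp_norm M p f = (\<integral>x. \<bar>f x\<bar> powr p \<partial>M) powr (1 / p)"

definition Lp_class :: "'a measure \<Rightarrow> real \<Rightarrow> ('a \<Rightarrow> real) \<Rightarrow> ('a \<Rightarrow> real) set" where
  "Lp_class M p f = {g \<in> Lp_fun M p. AE x in M. g x = f x}"

definition Lp_space :: "'a measure \<Rightarrow> real \<Rightarrow> ('a \<Rightarrow> real) set set" where
  "Lp_space M p = Lp_class M p ` Lp_fun M p"

definition Lp_dist :: "'a measure \<Rightarrow> real \<Rightarrow> ('a \<Rightarrow> real) set \<Rightarrow> ('a \<Rightarrow> real) set \<Rightarrow> real" where
  "Lp_dist M p F G = Lp_norm M p (\<lambda>x. (SOME f. f \<in> F) x - (SOME g. g \<in> G) x)"

definition Lp_topology :: "'a measure \<Rightarrow> real \<Rightarrow> ('a \<Rightarrow> real) set topology" where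
  "Lp_topology M p = Metric_space.mtopology (Lp_space M p) (Lp_dist M p)"

definition mball_of :: "'a measure \<Rightarrow> ('a \<Rightarrow> 'a \<Rightarrow> real) \<Rightarrow> 'a \<Rightarrow> real \<Rightarrow> 'a set" where
  "mball_of M d a r = {x \<in> space M. d a x < r}"

definition X0 :: "'a measure \<Rightarrow> 'a set" where
  "X0 M = {x \<in> space M. {x} \<in> sets M \<and> emeasure M {x} = 0}"

end

theory Submission
  imports Defs
begin

text \<open>Given an open cover, the Z-set property of B yields a map g, finer than the cover, whose
  image misses B. It remains to push g off A by a small continuous perturbation. Replace each
  function f by f + w (1 - f), where the cutoff w equals 1 on a small ball around a and vanishes
  outside a slightly larger one: the result is 1 near a, so it cannot lie in A because balls
  around a have positive measure. Since {a} is null, the perturbation has small L^p-norm once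
  the balls are small, and their size can be chosen as a continuous function of the point
  (a locally finite sum of ramps), so that the perturbed map stays finer than the cover and
  away from B.\<close>

lemma continuous_map_suminf_locally_finite:
  fixes f :: "nat \<Rightarrow> 'b \<Rightarrow> real"
  assumes cont: "\<And>n. continuous_map X euclideanreal (f n)"
    and locfin: "\<And>x. x \<in> topspace X \<Longrightarrow>
      \<exists>U N. openin X U \<and> x \<in> U \<and> (\<forall>y\<in>U. \<forall>n\<ge>N. f n y = 0)"
  shows "continuous_map X euclideanreal (\<lambda>x. \<Sum>n. f n x)"
  unfolding continuous_map_def
proof (intro conjI allI impI)
  show "(\<lambda>x. \<Sum>n. f n x) \<in> topspace X \<rightarrow> topspace euclideanreal" by simp
  fix V :: "real set" assume V: "openin euclideanreal V"
  show "openin X {x \<in> topspace X. (\<Sum>n. f n x) \<in> V}"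
  proof (subst openin_subopen, intro ballI)
    fix x assume "x \<in> {x \<in> topspace X. (\<Sum>n. f n x) \<in> V}"
    then have x: "x \<in> topspace X" "(\<Sum>n. f n x) \<in> V" by auto
    obtain U N where U: "openin X U" "x \<in> U" and zero: "\<And>y n. y \<in> U \<Longrightarrow> N \<le> n \<Longrightarrow> f n y = 0"
      using locfin[OF x(1)] by blast
    have partial: "(\<Sum>n. f n y) = (\<Sum>n<N. f n y)" if "y \<in> U" for y
      by (rule suminf_finite) (use zero that in auto)
    have "continuous_map X euclideanreal (\<lambda>y. \<Sum>n<N. f n y)"
      by (intro continuous_map_sum cont) auto
    then have "openin X {y \<in> topspace X. (\<Sum>n<N. f n y) \<in> V}"
      using V by (rule openin_continuous_map_preimage)
    then show "\<exists>T. openin X T \<and> x \<in> T \<and> T \<subseteq> {x \<in> topspace X. (\<Sum>n. f n x) \<in> V}"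
      using U x partial by (intro exI[of _ "U \<inter> {y \<in> topspace X. (\<Sum>n<N. f n y) \<in> V}"]) auto
  qed
qed

text \<open>The n-th ramp also vanishes where e n \<le> \<delta>/2; as e decreases in n, near each point all
  but finitely many ramps vanish.\<close>
lemma locally_finite_continuous_ramps:
  fixes e :: "nat \<Rightarrow> 'b \<Rightarrow> real"
  assumes cont: "\<And>n. continuous_map X euclideanreal (e n)"
    and antimono: "\<And>x m n. x \<in> topspace X \<Longrightarrow> m \<le> n \<Longrightarrow> e n x \<le> e m x"
    and small: "\<And>x \<epsilon>. x \<in> topspace X \<Longrightarrow> 0 < \<epsilon> \<Longrightarrow> \<exists>n. e n x < \<epsilon>"
    and \<delta>: "continuous_map X euclideanreal \<delta>" and \<delta>_pos: "\<And>x. x \<in> topspace X \<Longrightarrow> 0 < \<delta> x"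
  obtains t :: "nat \<Rightarrow> 'b \<Rightarrow> real" where "\<And>n. continuous_map X euclideanreal (t n)"
    "\<And>n x. 0 \<le> t n x" "\<And>n x. x \<in> topspace X \<Longrightarrow> \<delta> x \<le> e n x \<Longrightarrow> t n x = 1"
    "\<And>x. x \<in> topspace X \<Longrightarrow> \<exists>U N. openin X U \<and> x \<in> U \<and> (\<forall>y\<in>U. \<forall>n\<ge>N. t n y = 0)"
proof
  define t where "t n x = max 0 (min 1 (2 * e n x / \<delta> x - 1))" for n x
  show "continuous_map X euclideanreal (t n)" for n
    unfolding t_def using \<delta>_pos
    by (intro continuous_map_real_max continuous_map_real_min continuous_map_diff
        continuous_map_real_divide continuous_map_real_mult_left cont \<delta> continuous_map_const[THEN iffD2])
      (auto simp: less_imp_neq[symmetric])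
  show "0 \<le> t n x" for n x by (simp add: t_def)
  show "t n x = 1" if "x \<in> topspace X" "\<delta> x \<le> e n x" for n x
    using that \<delta>_pos[of x] by (simp add: t_def le_divide_eq)
  have t_zero: "t n x = 0" if "x \<in> topspace X" "e n x \<le> \<delta> x / 2" for n x
    using that \<delta>_pos[of x] by (simp add: t_def divide_le_eq)
  fix x assume x: "x \<in> topspace X"
  obtain N where N: "e N x < \<delta> x / 2" using small[OF x] \<delta>_pos[OF x] by (meson half_gt_zero)
  define U where "U = {y \<in> topspace X. 2 * e N y - \<delta> y \<in> {..<0}}"
  have "openin X U"
    unfolding U_def
    by (intro openin_continuous_map_preimage[where Y = euclideanreal] continuous_map_diff
        continuous_map_real_mult_left cont \<delta>) auto
  moreover have "t n y = 0" if "y \<in> U" "N \<le> n" for y n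
    using that antimono[of y N n] by (intro t_zero) (auto simp: U_def)
  moreover have "x \<in> U" using x N by (simp add: U_def)
  ultimately show "\<exists>U N. openin X U \<and> x \<in> U \<and> (\<forall>y\<in>U. \<forall>n\<ge>N. t n y = 0)"
    by (intro exI[of _ U] exI[of _ N]) auto
qed

text \<open>S is 1 plus the sum of the ramps, which is at least the least n with e n x < \<delta> x.\<close>
lemma continuous_map_index_bound:
  fixes e :: "nat \<Rightarrow> 'b \<Rightarrow> real"
  assumes cont: "\<And>n. continuous_map X euclideanreal (e n)"
    and antimono: "\<And>x m n. x \<in> topspace X \<Longrightarrow> m \<le> n \<Longrightarrow> e n x \<le> e m x"
    and small: "\<And>x \<epsilon>. x \<in> topspace X \<Longrightarrow> 0 < \<epsilon> \<Longrightarrow> \<exists>n. e n x < \<epsilon>"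
    and \<delta>: "continuous_map X euclideanreal \<delta>" and \<delta>_pos: "\<And>x. x \<in> topspace X \<Longrightarrow> 0 < \<delta> x"
  obtains S where "continuous_map X euclideanreal S"
    "\<And>x. x \<in> topspace X \<Longrightarrow> \<exists>n. real (Suc n) \<le> S x \<and> e n x < \<delta> x"
proof -
  obtain t where t_cont: "\<And>n. continuous_map X euclideanreal (t n)" and t_nonneg: "\<And>n x. 0 \<le> t n x"
    and t_one: "\<And>n x. x \<in> topspace X \<Longrightarrow> \<delta> x \<le> e n x \<Longrightarrow> t n x = 1"
    and locfin: "\<And>x. x \<in> topspace X \<Longrightarrow> \<exists>U N. openin X U \<and> x \<in> U \<and> (\<forall>y\<in>U. \<forall>n\<ge>N. t n y = 0)"
    using locally_finite_continuous_ramps[OF cont antimono small \<delta> \<delta>_pos] by blast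
  define S where "S x = 1 + (\<Sum>n. t n x)" for x
  have "continuous_map X euclideanreal S"
    unfolding S_def
    by (intro continuous_map_add continuous_map_suminf_locally_finite[OF t_cont locfin]
        continuous_map_const[THEN iffD2]) simp_all
  moreover have "\<exists>n. real (Suc n) \<le> S x \<and> e n x < \<delta> x" if x: "x \<in> topspace X" for x
  proof -
    define N where "N = (LEAST n. e n x < \<delta> x)"
    have eN: "e N x < \<delta> x"
      unfolding N_def by (rule LeastI_ex) (use small[OF x \<delta>_pos[OF x]] in blast)
    have "t i x = 1" if "i < N" for i
      using t_one[OF x] not_less_Least[OF that[unfolded N_def]] by simp
    then have "(\<Sum>i<N. t i x) = real N" by simp
    moreover have "(\<Sum>i<N. t i x) \<le> (\<Sum>n. t n x)"
    proof (rule sum_le_suminf)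
      obtain U M where "x \<in> U" "\<forall>y\<in>U. \<forall>n\<ge>M. t n y = 0" using locfin[OF x] by blast
      then show "summable (\<lambda>n. t n x)" by (intro summable_finite[of "{..<M}"]) auto
    qed (use t_nonneg in auto)
    ultimately show ?thesis using eN by (intro exI[of _ N]) (simp add: S_def)
  qed
  ultimately show ?thesis using that by blast
qed

context Metric_space
begin

lemma continuous_map_real_Lipschitz1:
  assumes "\<And>x y. x \<in> M \<Longrightarrow> y \<in> M \<Longrightarrow> f x \<le> f y + d x y"
  shows "continuous_map mtopology euclideanreal f"
proof -
  have "\<bar>f x - f y\<bar> \<le> d x y" if "x \<in> M" "y \<in> M" for x y
    using assms[OF that] assms[OF that(2,1)] commute[of x y] by linarith
  then have "continuous_map mtopology Met_TC.mtopology f"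
    unfolding metric_continuous_map[OF Met_TC.Metric_space_axioms]
    by (force simp: dist_real_def)
  then show ?thesis by simp
qed

lemma covering_radius:
  assumes op: "\<And>U. U \<in> \<U> \<Longrightarrow> openin mtopology U" and cov: "\<Union>\<U> = M"
  obtains r where "\<And>x. x \<in> M \<Longrightarrow> 0 < r x"
    "\<And>x y. x \<in> M \<Longrightarrow> y \<in> M \<Longrightarrow> r x \<le> r y + d x y"
    "\<And>x. x \<in> M \<Longrightarrow> \<exists>U\<in>\<U>. mball x (r x) \<subseteq> U"
proof
  define S where "S x = {\<rho>. \<rho> \<le> 1 \<and> (\<exists>U\<in>\<U>. mball x \<rho> \<subseteq> U)}" for x
  have bdd: "bdd_above (S x)" for x unfolding S_def by (auto intro: bdd_aboveI)
  have pos: "\<exists>\<rho>>0. \<rho> \<in> S x" if x: "x \<in> M" for x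
  proof -
    obtain U where U: "U \<in> \<U>" "x \<in> U" using cov x by auto
    then obtain \<epsilon> where "\<epsilon> > 0" "mball x \<epsilon> \<subseteq> U" using op[OF U(1)] by (auto simp: openin_mtopology)
    moreover have "mball x (min \<epsilon> 1) \<subseteq> mball x \<epsilon>" by (rule mball_subset_concentric) simp
    ultimately show ?thesis using U by (intro exI[of _ "min \<epsilon> 1"]) (auto simp: S_def)
  qed
  have ne: "S x \<noteq> {}" if "x \<in> M" for x using pos[OF that] by auto
  fix x assume x: "x \<in> M"
  have Sup_pos: "0 < Sup (S x)"
    using pos[OF x] cSup_upper[OF _ bdd] by fastforce
  then show "0 < Sup (S x) / 2" by simp
  obtain \<rho> where "\<rho> \<in> S x" "Sup (S x) / 2 < \<rho>"
    using less_cSup_iff[OF ne[OF x] bdd, of "Sup (S x) / 2"] Sup_pos by auto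
  then obtain U where "U \<in> \<U>" "mball x (Sup (S x) / 2) \<subseteq> U"
    using mball_subset_concentric[of "Sup (S x) / 2" \<rho> x] unfolding S_def by auto
  then show "\<exists>U\<in>\<U>. mball x (Sup (S x) / 2) \<subseteq> U" by blast
  fix y assume y: "y \<in> M"
  have "\<rho> - d x y \<in> S y" if \<rho>: "\<rho> \<in> S x" for \<rho>
  proof -
    obtain U where U: "U \<in> \<U>" "mball x \<rho> \<subseteq> U" "\<rho> \<le> 1" using \<rho> by (auto simp: S_def)
    have "mball y (\<rho> - d x y) \<subseteq> mball x \<rho>"
    proof
      fix z assume "z \<in> mball y (\<rho> - d x y)"
      then show "z \<in> mball x \<rho>" using triangle[OF x y, of z] x by auto
    qed
    moreover have "\<rho> - d x y \<le> 1" using U(3) nonneg[of x y] by linarith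
    ultimately show ?thesis using U unfolding S_def by blast
  qed
  then have "\<rho> \<le> Sup (S y) + d x y" if "\<rho> \<in> S x" for \<rho>
    using cSup_upper[OF _ bdd, of "\<rho> - d x y" y] that by simp
  then have "Sup (S x) \<le> Sup (S y) + d x y"
    using ne[OF x] by (intro cSup_least) auto
  then show "Sup (S x) / 2 \<le> Sup (S y) / 2 + d x y" using nonneg[of x y] by linarith
qed

lemma distance_to_closed_set:
  assumes B: "closedin mtopology B"
  obtains \<beta> where "\<And>x b. b \<in> B \<Longrightarrow> \<beta> x \<le> d x b"
    "\<And>x y. x \<in> M \<Longrightarrow> y \<in> M \<Longrightarrow> \<beta> x \<le> \<beta> y + d x y"
    "\<And>x. x \<in> M \<Longrightarrow> x \<notin> B \<Longrightarrow> 0 < \<beta> x"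
proof
  define D where "D x = insert 1 ((\<lambda>b. d x b) ` B)" for x
  have bdd: "bdd_below (D x)" for x unfolding D_def by (rule bdd_belowI[of _ 0]) auto
  have le1: "Inf (D x) \<le> 1" for x
    unfolding D_def by (rule cInf_lower[OF _ bdd[unfolded D_def]]) simp
  show le_d: "Inf (D x) \<le> d x b" if "b \<in> B" for x b
    unfolding D_def using that by (intro cInf_lower[OF _ bdd[unfolded D_def]]) auto
  fix x assume x: "x \<in> M"
  {
    fix y assume y: "y \<in> M"
    have "Inf (D x) - d x y \<le> z" if z: "z \<in> D y" for z
    proof (cases "z = 1")
      case True
      then show ?thesis using le1[of x] nonneg[of x y] by linarith
    next
      case False
      then obtain b where b: "b \<in> B" "z = d y b" using z by (auto simp: D_def)
      then have "d x b \<le> d x y + z"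
        using triangle[OF x y, of b] closedin_subset[OF B] by auto
      then show ?thesis using le_d[OF b(1), of x] by linarith
    qed
    then have "Inf (D x) - d x y \<le> Inf (D y)"
      by (intro cInf_greatest) (auto simp: D_def)
    then show "Inf (D x) \<le> Inf (D y) + d x y" by simp
  }
  assume "x \<notin> B"
  then obtain \<epsilon> where \<epsilon>: "\<epsilon> > 0" "mball x \<epsilon> \<subseteq> M - B"
    using B x unfolding closedin_def openin_mtopology topspace_mtopology by blast
  have "min \<epsilon> 1 \<le> z" if z: "z \<in> D x" for z
  proof (cases "z = 1")
    case False
    then obtain b where b: "b \<in> B" "z = d x b" using z by (auto simp: D_def)
    then have "b \<notin> mball x \<epsilon>" using \<epsilon>(2) by blast
    then show ?thesis using b x closedin_subset[OF B] by auto
  qed simp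
  then have "min \<epsilon> 1 \<le> Inf (D x)"
    by (intro cInf_greatest) (auto simp: D_def)
  then show "0 < Inf (D x)" using \<epsilon> by simp
qed

text \<open>Apply the Z-set property to the cover by the balls B(y, r y / 4).\<close>
lemma Z_set_avoiding_map:
  assumes Z: "Z_set mtopology B"
    and r_pos: "\<And>x. x \<in> M \<Longrightarrow> 0 < r x"
    and r_Lip: "\<And>x y. x \<in> M \<Longrightarrow> y \<in> M \<Longrightarrow> r x \<le> r y + d x y"
  obtains g where "continuous_map mtopology mtopology g"
    "\<And>x. x \<in> M \<Longrightarrow> d x (g x) < r x" "\<And>x. x \<in> M \<Longrightarrow> g x \<notin> B"
proof -
  define \<V> where "\<V> = (\<lambda>y. mball y (r y / 4)) ` M"
  have "(\<forall>V\<in>\<V>. openin mtopology V) \<and> \<Union>\<V> = topspace mtopology"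
    using r_pos by (force simp: \<V>_def)
  with Z obtain g where g: "continuous_map mtopology mtopology g"
    and close: "\<forall>x\<in>M. \<exists>V\<in>\<V>. g x \<in> V \<and> x \<in> V" and miss: "g ` M \<inter> B = {}"
    unfolding Z_set_def by auto
  have "d x (g x) < r x" if x: "x \<in> M" for x
  proof -
    obtain y where y: "y \<in> M" "g x \<in> M" "d y x < r y / 4" "d y (g x) < r y / 4"
      using close x by (auto simp: \<V>_def)
    then show ?thesis
      using triangle[OF x y(1,2)] commute[of x y] r_Lip[OF y(1) x] r_pos[OF x] by linarith
  qed
  then show ?thesis using that g miss by blast
qed

text \<open>g is closer to the identity than half a covering radius r, and \<delta> is at most half of both
  r and the distance from g x to B.\<close>
lemma Z_set_stable_approximation:
  assumes Z: "Z_set mtopology B"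
    and \<U>: "\<And>U. U \<in> \<U> \<Longrightarrow> openin mtopology U" "\<Union>\<U> = M"
  obtains g \<delta> where "continuous_map mtopology mtopology g"
    "continuous_map mtopology euclideanreal \<delta>" "\<And>x. x \<in> M \<Longrightarrow> 0 < \<delta> x"
    "\<And>x y. x \<in> M \<Longrightarrow> y \<in> M \<Longrightarrow> d (g x) y < \<delta> x \<Longrightarrow> y \<notin> B \<and> (\<exists>U\<in>\<U>. y \<in> U \<and> x \<in> U)"
proof -
  obtain r where r_pos: "\<And>x. x \<in> M \<Longrightarrow> 0 < r x"
    and r_Lip: "\<And>x y. x \<in> M \<Longrightarrow> y \<in> M \<Longrightarrow> r x \<le> r y + d x y"
    and r_cover: "\<And>x. x \<in> M \<Longrightarrow> \<exists>U\<in>\<U>. mball x (r x) \<subseteq> U"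
    using covering_radius[OF \<U>] by blast
  obtain g where g: "continuous_map mtopology mtopology g"
    and g_close: "\<And>x. x \<in> M \<Longrightarrow> d x (g x) < r x / 2" and g_miss: "\<And>x. x \<in> M \<Longrightarrow> g x \<notin> B"
  proof (rule Z_set_avoiding_map[OF Z, of "\<lambda>x. r x / 2"])
    show "r x / 2 \<le> r y / 2 + d x y" if "x \<in> M" "y \<in> M" for x y
      using r_Lip[OF that] nonneg[of x y] by linarith
  qed (use r_pos that in auto)
  have gM: "g x \<in> M" if "x \<in> M" for x
    using continuous_map_image_subset_topspace[OF g] that by auto
  have "closedin mtopology B" using Z by (simp add: Z_set_def)
  then obtain \<beta> where \<beta>_le: "\<And>x b. b \<in> B \<Longrightarrow> \<beta> x \<le> d x b"
    and \<beta>_Lip: "\<And>x y. x \<in> M \<Longrightarrow> y \<in> M \<Longrightarrow> \<beta> x \<le> \<beta> y + d x y"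
    and \<beta>_pos: "\<And>x. x \<in> M \<Longrightarrow> x \<notin> B \<Longrightarrow> 0 < \<beta> x"
    by (rule distance_to_closed_set) blast
  define \<delta> where "\<delta> x = min (r x / 2) (\<beta> (g x) / 2)" for x
  show ?thesis
  proof (rule that[OF g])
    have "continuous_map mtopology euclideanreal (\<beta> \<circ> g)"
      using g continuous_map_real_Lipschitz1[OF \<beta>_Lip] by (rule continuous_map_compose)
    then show "continuous_map mtopology euclideanreal \<delta>"
      unfolding \<delta>_def o_def
      by (intro continuous_map_real_min continuous_map_real_divide
          continuous_map_real_Lipschitz1[OF r_Lip] continuous_map_const[THEN iffD2]) simp_all
    show "0 < \<delta> x" if "x \<in> M" for x
      using r_pos[OF that] \<beta>_pos[OF gM g_miss, OF that that] by (simp add: \<delta>_def)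
    fix x y assume x: "x \<in> M" and y: "y \<in> M" and close: "d (g x) y < \<delta> x"
    have "y \<notin> B"
      using \<beta>_le[of y "g x"] close \<beta>_pos[OF gM g_miss, OF x x] by (force simp: \<delta>_def)
    moreover have "d x y < r x"
      using triangle[OF x gM[OF x] y] g_close[OF x] close by (simp add: \<delta>_def)
    then have "y \<in> mball x (r x)" "x \<in> mball x (r x)" using x y r_pos[OF x] by auto
    then have "\<exists>U\<in>\<U>. y \<in> U \<and> x \<in> U" using r_cover[OF x] by blast
    ultimately show "y \<notin> B \<and> (\<exists>U\<in>\<U>. y \<in> U \<and> x \<in> U)" by blast
  qed
qed

lemma Z_set_Un_if_perturbable:
  assumes Z: "Z_set mtopology B" and closed: "closedin mtopology (A \<union> B)"
    and perturb: "\<And>g \<delta>. continuous_map mtopology mtopology g \<Longrightarrow>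
      continuous_map mtopology euclideanreal \<delta> \<Longrightarrow> (\<And>x. x \<in> M \<Longrightarrow> 0 < \<delta> x) \<Longrightarrow>
      \<exists>\<Phi>. continuous_map mtopology mtopology \<Phi> \<and> (\<forall>x\<in>M. d (g x) (\<Phi> x) < \<delta> x \<and> \<Phi> x \<notin> A)"
  shows "Z_set mtopology (A \<union> B)"
  unfolding Z_set_def topspace_mtopology
proof (intro conjI allI impI closed)
  fix \<U> assume "(\<forall>U\<in>\<U>. openin mtopology U) \<and> \<Union>\<U> = M"
  then obtain g \<delta> where g: "continuous_map mtopology mtopology g"
    and \<delta>: "continuous_map mtopology euclideanreal \<delta>" "\<And>x. x \<in> M \<Longrightarrow> 0 < \<delta> x"
    and stable: "\<And>x y. x \<in> M \<Longrightarrow> y \<in> M \<Longrightarrow> d (g x) y < \<delta> x \<Longrightarrow> y \<notin> B \<and> (\<exists>U\<in>\<U>. y \<in> U \<and> x \<in> U)"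
    using Z_set_stable_approximation[OF Z] by metis
  obtain \<Phi> where \<Phi>: "continuous_map mtopology mtopology \<Phi>"
    and \<Phi>_close: "\<forall>x\<in>M. d (g x) (\<Phi> x) < \<delta> x \<and> \<Phi> x \<notin> A"
    using perturb[OF g \<delta>] by blast
  have "\<Phi> x \<notin> A \<union> B \<and> (\<exists>U\<in>\<U>. \<Phi> x \<in> U \<and> x \<in> U)" if x: "x \<in> M" for x
  proof -
    have "\<Phi> x \<in> M" using continuous_map_image_subset_topspace[OF \<Phi>] x by auto
    then show ?thesis using stable[OF x] \<Phi>_close x by blast
  qed
  then show "\<exists>f. continuous_map mtopology mtopology f \<and> (\<forall>z\<in>M. \<exists>U\<in>\<U>. f z \<in> U \<and> z \<in> U) \<and>
      f ` M \<inter> (A \<union> B) = {}"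
    using \<Phi> by (intro exI[of _ \<Phi>] conjI) fastforce+
qed

end

lemma powr_convex_combination_le:
  fixes p t u v :: real
  assumes p: "1 \<le> p" and u: "0 \<le> u" and v: "0 \<le> v" and t: "0 \<le> t" "t \<le> 1"
  shows "(t * u + (1 - t) * v) powr p \<le> t * u powr p + (1 - t) * v powr p"
proof -
  have scale: "(c * w) powr p \<le> c * w powr p" if "0 \<le> c" "c \<le> 1" "0 \<le> w" for c w :: real
  proof -
    have "c powr p \<le> c"
      using that p by (cases "c = 0") (auto intro: powr_le_one_le)
    then have "c powr p * w powr p \<le> c * w powr p"
      by (rule mult_right_mono) simp
    then show ?thesis using that by (simp add: powr_mult)
  qed
  show ?thesis
  proof (cases "u = 0 \<or> v = 0")
    case True
    then show ?thesis using scale[of "1 - t" v] scale[of t u] t u v by auto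
  next
    case False
    then have "u \<in> {0<..}" "v \<in> {0<..}" using u v by auto
    from convex_onD[OF powr_convex[OF p] _ _ this(2) this(1), of t] t
    show ?thesis by (simp add: algebra_simps)
  qed
qed

lemma powr_abs_add_div_le:
  fixes a b p x y :: real
  assumes p: "1 \<le> p" and a: "0 < a" and b: "0 < b"
  shows "(\<bar>x + y\<bar> / (a + b)) powr p \<le> a / (a + b) * (\<bar>x\<bar> / a) powr p + b / (a + b) * (\<bar>y\<bar> / b) powr p"
proof -
  have "b / (a + b) = 1 - a / (a + b)" using a b by (simp add: field_simps)
  moreover have "\<bar>x + y\<bar> / (a + b) \<le> a / (a + b) * (\<bar>x\<bar> / a) + b / (a + b) * (\<bar>y\<bar> / b)"
    using a b by (simp add: add_divide_distrib[symmetric] divide_right_mono)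
  ultimately have "(\<bar>x + y\<bar> / (a + b)) powr p
      \<le> (a / (a + b) * (\<bar>x\<bar> / a) + (1 - a / (a + b)) * (\<bar>y\<bar> / b)) powr p"
    using p a b by (intro powr_mono2) auto
  also have "\<dots> \<le> a / (a + b) * (\<bar>x\<bar> / a) powr p + (1 - a / (a + b)) * (\<bar>y\<bar> / b) powr p"
    using a b by (intro powr_convex_combination_le p) auto
  finally show ?thesis using \<open>b / (a + b) = 1 - a / (a + b)\<close> by simp
qed

locale Lp_exponent =
  fixes M :: "'a measure" and p :: real
  assumes one_le_p: "1 \<le> p"
begin

lemma p_pos: "0 < p" using one_le_p by simp

lemma Lp_funI: "f \<in> borel_measurable M \<Longrightarrow> integrable M (\<lambda>x. \<bar>f x\<bar> powr p) \<Longrightarrow> f \<in> Lp_fun M p"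
  by (simp add: Lp_fun_def)

lemma Lp_fun_measurable: "f \<in> Lp_fun M p \<Longrightarrow> f \<in> borel_measurable M"
  by (simp add: Lp_fun_def)

lemma Lp_fun_integrable: "f \<in> Lp_fun M p \<Longrightarrow> integrable M (\<lambda>x. \<bar>f x\<bar> powr p)"
  by (simp add: Lp_fun_def)

lemma Lp_fun_dominated:
  assumes f: "f \<in> Lp_fun M p" and g: "g \<in> borel_measurable M"
    and le: "\<And>x. x \<in> space M \<Longrightarrow> \<bar>g x\<bar> \<le> \<bar>f x\<bar>"
  shows "g \<in> Lp_fun M p"
proof (rule Lp_funI[OF g])
  show "integrable M (\<lambda>x. \<bar>g x\<bar> powr p)"
  proof (rule Bochner_Integration.integrable_bound[OF Lp_fun_integrable[OF f]])
    show "(\<lambda>x. \<bar>g x\<bar> powr p) \<in> borel_measurable M" using g by measurable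
    show "AE x in M. norm (\<bar>g x\<bar> powr p) \<le> norm (\<bar>f x\<bar> powr p)"
      using le one_le_p by (auto intro!: AE_I2 powr_mono2)
  qed
qed

lemma Lp_norm_nonneg: "0 \<le> Lp_norm M p f"
  by (simp add: Lp_norm_def)

lemma Lp_norm_mono:
  assumes f: "f \<in> Lp_fun M p" and g: "g \<in> borel_measurable M"
    and le: "\<And>x. x \<in> space M \<Longrightarrow> \<bar>g x\<bar> \<le> \<bar>f x\<bar>"
  shows "Lp_norm M p g \<le> Lp_norm M p f"
proof -
  have "(\<integral>x. \<bar>g x\<bar> powr p \<partial>M) \<le> (\<integral>x. \<bar>f x\<bar> powr p \<partial>M)"
    using le one_le_p
    by (intro integral_mono Lp_fun_integrable Lp_fun_dominated[OF assms] f) (auto intro!: powr_mono2)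
  then show ?thesis unfolding Lp_norm_def using one_le_p by (intro powr_mono2) auto
qed

lemma Lp_fun_add:
  assumes f: "f \<in> Lp_fun M p" and g: "g \<in> Lp_fun M p"
  shows "(\<lambda>x. f x + g x) \<in> Lp_fun M p"
proof (rule Lp_funI)
  show fg: "(\<lambda>x. f x + g x) \<in> borel_measurable M"
    using Lp_fun_measurable[OF f] Lp_fun_measurable[OF g] by measurable
  show "integrable M (\<lambda>x. \<bar>f x + g x\<bar> powr p)"
  proof (rule Bochner_Integration.integrable_bound)
    show "integrable M (\<lambda>x. 2 powr p * (\<bar>f x\<bar> powr p / 2 + \<bar>g x\<bar> powr p / 2))"
      using Lp_fun_integrable[OF f] Lp_fun_integrable[OF g] by auto
    show "(\<lambda>x. \<bar>f x + g x\<bar> powr p) \<in> borel_measurable M" using fg by measurable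
    have "\<bar>f x + g x\<bar> powr p \<le> 2 powr p * (\<bar>f x\<bar> powr p / 2 + \<bar>g x\<bar> powr p / 2)" for x
      using powr_abs_add_div_le[OF one_le_p, of 1 1 "f x" "g x"]
      by (simp add: powr_divide field_simps)
    then show "AE x in M. norm (\<bar>f x + g x\<bar> powr p)
        \<le> norm (2 powr p * (\<bar>f x\<bar> powr p / 2 + \<bar>g x\<bar> powr p / 2))"
      by (intro AE_I2) simp
  qed
qed

lemma Lp_fun_cmult:
  assumes f: "f \<in> Lp_fun M p"
  shows "(\<lambda>x. c * f x) \<in> Lp_fun M p"
proof (rule Lp_funI)
  show "(\<lambda>x. c * f x) \<in> borel_measurable M" using Lp_fun_measurable[OF f] by measurable
  have "integrable M (\<lambda>x. \<bar>c\<bar> powr p * \<bar>f x\<bar> powr p)" using Lp_fun_integrable[OF f] by auto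
  then show "integrable M (\<lambda>x. \<bar>c * f x\<bar> powr p)" by (simp add: abs_mult powr_mult)
qed

lemma Lp_fun_diff:
  assumes f: "f \<in> Lp_fun M p" and g: "g \<in> Lp_fun M p"
  shows "(\<lambda>x. f x - g x) \<in> Lp_fun M p"
  using Lp_fun_add[OF f Lp_fun_cmult[OF g, of "-1"]] by simp

lemma Lp_norm_cmult: "Lp_norm M p (\<lambda>x. c * f x) = \<bar>c\<bar> * Lp_norm M p f"
proof -
  have "(\<integral>x. \<bar>c * f x\<bar> powr p \<partial>M) = \<bar>c\<bar> powr p * (\<integral>x. \<bar>f x\<bar> powr p \<partial>M)"
    by (simp add: abs_mult powr_mult)
  moreover have "(\<bar>c\<bar> powr p) powr (1/p) = \<bar>c\<bar>" using p_pos by (simp add: powr_powr)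
  ultimately show ?thesis by (simp add: Lp_norm_def powr_mult)
qed

lemma Lp_norm_powr: "Lp_norm M p f powr p = (\<integral>x. \<bar>f x\<bar> powr p \<partial>M)"
  using p_pos by (simp add: Lp_norm_def powr_powr)

lemma Lp_norm_eq_0_iff:
  assumes f: "f \<in> Lp_fun M p"
  shows "Lp_norm M p f = 0 \<longleftrightarrow> (AE x in M. f x = 0)"
proof -
  have "Lp_norm M p f = 0 \<longleftrightarrow> (\<integral>x. \<bar>f x\<bar> powr p \<partial>M) = 0"
    using p_pos by (simp add: Lp_norm_def)
  also have "\<dots> \<longleftrightarrow> (AE x in M. \<bar>f x\<bar> powr p = 0)"
    by (rule integral_nonneg_eq_0_iff_AE[OF Lp_fun_integrable[OF f]]) simp
  finally show ?thesis by simp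
qed

lemma Lp_norm_cong_AE:
  assumes "f \<in> borel_measurable M" "g \<in> borel_measurable M" "AE x in M. f x = g x"
  shows "Lp_norm M p f = Lp_norm M p g"
proof -
  have "(\<integral>x. \<bar>f x\<bar> powr p \<partial>M) = (\<integral>x. \<bar>g x\<bar> powr p \<partial>M)"
    using assms by (intro integral_cong_AE) auto
  then show ?thesis by (simp add: Lp_norm_def)
qed

text \<open>Minkowski's inequality: integrating the pointwise bound for |f + g| / (a + b), with
  a, b the norms of f and g, shows that the p-th power of this quotient has integral at most 1.\<close>
lemma Lp_norm_triangle:
  assumes f: "f \<in> Lp_fun M p" and g: "g \<in> Lp_fun M p"
  shows "Lp_norm M p (\<lambda>x. f x + g x) \<le> Lp_norm M p f + Lp_norm M p g"
proof -
  define a b where "a = Lp_norm M p f" and "b = Lp_norm M p g"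
  have fm: "f \<in> borel_measurable M" and gm: "g \<in> borel_measurable M"
    using f g by (simp_all add: Lp_fun_measurable)
  consider "a = 0" | "b = 0" | "0 < a" "0 < b"
    using Lp_norm_nonneg unfolding a_def b_def by (metis order_less_le)
  then show ?thesis
  proof cases
    case 1
    then have "AE x in M. f x + g x = g x" using Lp_norm_eq_0_iff[OF f] by (auto simp: a_def)
    then have "Lp_norm M p (\<lambda>x. f x + g x) = Lp_norm M p g"
      using fm gm by (intro Lp_norm_cong_AE) auto
    then show ?thesis using 1 by (simp add: a_def)
  next
    case 2
    then have "AE x in M. f x + g x = f x" using Lp_norm_eq_0_iff[OF g] by (auto simp: b_def)
    then have "Lp_norm M p (\<lambda>x. f x + g x) = Lp_norm M p f"
      using fm gm by (intro Lp_norm_cong_AE) auto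
    then show ?thesis using 2 by (simp add: b_def)
  next
    case 3
    have int_f: "(\<integral>x. \<bar>f x\<bar> powr p \<partial>M) = a powr p" and int_g: "(\<integral>x. \<bar>g x\<bar> powr p \<partial>M) = b powr p"
      by (simp_all add: a_def b_def Lp_norm_powr)
    have "(\<integral>x. (\<bar>f x + g x\<bar> / (a + b)) powr p \<partial>M)
        \<le> (\<integral>x. a / (a + b) * (\<bar>f x\<bar> / a) powr p + b / (a + b) * (\<bar>g x\<bar> / b) powr p \<partial>M)"
      using 3 Lp_fun_integrable[OF f] Lp_fun_integrable[OF g] Lp_fun_integrable[OF Lp_fun_add[OF f g]]
      by (intro integral_mono powr_abs_add_div_le one_le_p) (auto simp: powr_divide)
    also have "\<dots> = a / (a + b) + b / (a + b)"
      using 3 Lp_fun_integrable[OF f] Lp_fun_integrable[OF g] by (simp add: powr_divide int_f int_g)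
    also have "\<dots> = 1" using 3 by (simp add: add_divide_distrib[symmetric])
    finally have "(\<integral>x. \<bar>f x + g x\<bar> powr p \<partial>M) \<le> (a + b) powr p"
      using 3 by (simp add: powr_divide)
    then have "Lp_norm M p (\<lambda>x. f x + g x) \<le> ((a + b) powr p) powr (1/p)"
      unfolding Lp_norm_def using one_le_p by (intro powr_mono2) auto
    also have "\<dots> = a + b" using p_pos 3 by (simp add: powr_powr)
    finally show ?thesis by (simp add: a_def b_def)
  qed
qed

lemma Lp_class_self: "f \<in> Lp_fun M p \<Longrightarrow> f \<in> Lp_class M p f"
  by (simp add: Lp_class_def)

lemma Lp_class_in_Lp_space: "f \<in> Lp_fun M p \<Longrightarrow> Lp_class M p f \<in> Lp_space M p"
  by (simp add: Lp_space_def)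

lemma Lp_class_eq_iff:
  assumes f: "f \<in> Lp_fun M p" and g: "g \<in> Lp_fun M p"
  shows "Lp_class M p f = Lp_class M p g \<longleftrightarrow> (AE x in M. f x = g x)"
proof
  assume "Lp_class M p f = Lp_class M p g"
  then have "f \<in> Lp_class M p g" using Lp_class_self[OF f] by simp
  then show "AE x in M. f x = g x" by (simp add: Lp_class_def)
next
  assume "AE x in M. f x = g x"
  then show "Lp_class M p f = Lp_class M p g"
    unfolding Lp_class_def by (auto elim: AE_mp)
qed

lemma Lp_space_some:
  assumes F: "F \<in> Lp_space M p"
  shows "(SOME f. f \<in> F) \<in> F" "(SOME f. f \<in> F) \<in> Lp_fun M p"
    "Lp_class M p (SOME f. f \<in> F) = F"
proof -
  obtain f where f: "f \<in> Lp_fun M p" and F_eq: "F = Lp_class M p f"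
    using F by (auto simp: Lp_space_def)
  then have "f \<in> F" using Lp_class_self by simp
  then show some: "(SOME f. f \<in> F) \<in> F" by (rule someI[where P = "\<lambda>f. f \<in> F"])
  then show some_Lp: "(SOME f. f \<in> F) \<in> Lp_fun M p" using F_eq by (simp add: Lp_class_def)
  have "AE x in M. (SOME f. f \<in> F) x = f x" using some F_eq by (simp add: Lp_class_def)
  then show "Lp_class M p (SOME f. f \<in> F) = F" using Lp_class_eq_iff[OF some_Lp f] F_eq by simp
qed

lemma Lp_dist_Lp_class:
  assumes f: "f \<in> Lp_fun M p" and g: "g \<in> Lp_fun M p"
  shows "Lp_dist M p (Lp_class M p f) (Lp_class M p g) = Lp_norm M p (\<lambda>x. f x - g x)"
proof -
  note some_f = Lp_space_some[OF Lp_class_in_Lp_space[OF f]]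
    and some_g = Lp_space_some[OF Lp_class_in_Lp_space[OF g]]
  show ?thesis unfolding Lp_dist_def
    using some_f(1) some_g(1) Lp_fun_diff[OF some_f(2) some_g(2)] Lp_fun_diff[OF f g]
    by (intro Lp_norm_cong_AE) (auto simp: Lp_fun_measurable Lp_class_def elim: AE_mp)
qed

lemma Lp_metric: "Metric_space (Lp_space M p) (Lp_dist M p)"
proof
  fix F G :: "('a \<Rightarrow> real) set"
  show "0 \<le> Lp_dist M p F G" by (simp add: Lp_dist_def Lp_norm_nonneg)
  show "Lp_dist M p F G = Lp_dist M p G F"
    unfolding Lp_dist_def Lp_norm_def by (simp add: abs_minus_commute)
next
  fix F G assume F: "F \<in> Lp_space M p" and G: "G \<in> Lp_space M p"
  note some_F = Lp_space_some[OF F] and some_G = Lp_space_some[OF G]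
  have "Lp_dist M p F G = 0 \<longleftrightarrow> (AE x in M. (SOME f. f \<in> F) x - (SOME f. f \<in> G) x = 0)"
    unfolding Lp_dist_def by (rule Lp_norm_eq_0_iff[OF Lp_fun_diff[OF some_F(2) some_G(2)]])
  also have "\<dots> \<longleftrightarrow> Lp_class M p (SOME f. f \<in> F) = Lp_class M p (SOME f. f \<in> G)"
    using Lp_class_eq_iff[OF some_F(2) some_G(2)] by simp
  finally show "Lp_dist M p F G = 0 \<longleftrightarrow> F = G" using some_F(3) some_G(3) by simp
next
  fix F G H assume "F \<in> Lp_space M p" "G \<in> Lp_space M p" "H \<in> Lp_space M p"
  note some = Lp_space_some(2)[OF this(1)] Lp_space_some(2)[OF this(2)] Lp_space_some(2)[OF this(3)]
  show "Lp_dist M p F H \<le> Lp_dist M p F G + Lp_dist M p G H"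
    unfolding Lp_dist_def
    using Lp_norm_triangle[OF Lp_fun_diff[OF some(1,2)] Lp_fun_diff[OF some(2,3)]] by simp
qed

end

sublocale Lp_exponent \<subseteq> Lp: Metric_space "Lp_space M p" "Lp_dist M p"
  by (rule Lp_metric)

locale Lp_nonatomic_point = Lp_exponent M p for M :: "'a measure" and p :: real +
  fixes d :: "'a \<Rightarrow> 'a \<Rightarrow> real" and a :: 'a and r0 :: real
  assumes metric: "Metric_space (space M) d"
    and a_X0: "a \<in> X0 M"
    and balls: "\<And>r. r > 0 \<Longrightarrow> mball_of M d a r \<in> sets M \<and> emeasure M (mball_of M d a r) > 0"
    and r0_pos: "r0 > 0"
    and ball_r0_finite: "emeasure M (mball_of M d a r0) < \<infinity>"
begin

abbreviation ball_a :: "real \<Rightarrow> 'a set" where "ball_a r \<equiv> mball_of M d a r"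

lemma a_null: "{a} \<in> null_sets M"
  using a_X0 by (simp add: X0_def null_sets_def)

lemma dist_a_nonneg: "0 \<le> d a x"
  using Metric_space.nonneg[OF metric] by simp

lemma dist_a_pos: "x \<in> space M \<Longrightarrow> x \<noteq> a \<Longrightarrow> 0 < d a x"
  using Metric_space.mdist_pos_less[OF metric, of a x] a_X0 by (simp add: X0_def)

lemma ball_a_sets: "r > 0 \<Longrightarrow> ball_a r \<in> sets M"
  using balls by simp

lemma ball_a_r0_sets[measurable]: "ball_a r0 \<in> sets M"
  using r0_pos by (rule ball_a_sets)

lemma ball_a_Suc_sets[measurable]: "ball_a (r0 / real (Suc n)) \<in> sets M"
  using r0_pos by (intro ball_a_sets) simp

lemma dist_a_measurable[measurable]: "(\<lambda>x. d a x) \<in> borel_measurable M"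
  unfolding borel_measurable_iff_less
proof
  fix r :: real
  show "{x \<in> space M. d a x < r} \<in> sets M"
  proof (cases "r > 0")
    case True
    then show ?thesis using ball_a_sets[OF True] by (simp add: mball_of_def)
  next
    case False
    then have "\<not> d a x < r" for x using dist_a_nonneg[of x] by linarith
    then show ?thesis by simp
  qed
qed

lemma ball_a_not_null:
  assumes "0 < \<rho>"
  shows "\<not> (AE x in M. x \<notin> ball_a \<rho>)"
proof
  assume "AE x in M. x \<notin> ball_a \<rho>"
  then have "ball_a \<rho> \<in> null_sets M" using ball_a_sets[OF assms] by (simp add: AE_iff_null_sets)
  then show False using balls[OF assms] by (simp add: null_sets_def)
qed

text \<open>lift s h agrees with h off B(a, r0/s), equals 1 on B(a, r0/(s + 1)), and moves h only on
  the part of 1 - h inside the ball B(a, r0), which is recorded by gap h. At x = a the division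
  by d a a = 0 gives cutoff s a = 0 for s \<ge> 0; this is harmless as {a} is null.\<close>
definition cutoff :: "real \<Rightarrow> 'a \<Rightarrow> real" where
  "cutoff s x = max 0 (min 1 (r0 / d a x - s))"

definition lift :: "real \<Rightarrow> ('a \<Rightarrow> real) \<Rightarrow> 'a \<Rightarrow> real" where
  "lift s h x = h x + cutoff s x * (1 - h x)"

definition gap :: "('a \<Rightarrow> real) \<Rightarrow> 'a \<Rightarrow> real" where
  "gap h x = (1 - h x) * indicator (ball_a r0) x"

definition gap_near :: "nat \<Rightarrow> ('a \<Rightarrow> real) \<Rightarrow> real" where
  "gap_near n h = Lp_norm M p (\<lambda>x. gap h x * indicator (ball_a (r0 / real (Suc n))) x)"

lemma cutoff_measurable[measurable]: "cutoff s \<in> borel_measurable M"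
  unfolding cutoff_def by measurable

lemma cutoff_bounds: "0 \<le> cutoff s x" "cutoff s x \<le> 1"
  by (auto simp: cutoff_def)

lemma cutoff_eq_0:
  assumes "0 < s" "r0 / s \<le> d a x"
  shows "cutoff s x = 0"
proof -
  have "0 < d a x" using assms r0_pos by (smt (verit) divide_pos_pos)
  then have "r0 / d a x \<le> s" using assms by (simp add: divide_le_eq mult.commute pos_divide_le_eq)
  then show ?thesis by (simp add: cutoff_def)
qed

lemma cutoff_eq_1:
  assumes "0 \<le> s" "0 < d a x" "d a x < r0 / (s + 1)"
  shows "cutoff s x = 1"
proof -
  have "(s + 1) * d a x < r0" using assms by (simp add: pos_less_divide_eq mult.commute)
  then have "s + 1 < r0 / d a x" using assms(2) by (simp add: pos_less_divide_eq)
  then show ?thesis by (simp add: cutoff_def)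
qed

lemma cutoff_Lipschitz: "\<bar>cutoff s x - cutoff t x\<bar> \<le> \<bar>s - t\<bar>"
  unfolding cutoff_def by (simp add: abs_le_iff) linarith

lemma cutoff_eq_0_outside:
  assumes "1 \<le> s" "x \<in> space M" "x \<notin> ball_a r0"
  shows "cutoff s x = 0"
proof (rule cutoff_eq_0)
  have "r0 / s \<le> r0" using assms(1) r0_pos by (simp add: divide_le_eq)
  then show "r0 / s \<le> d a x" using assms by (simp add: mball_of_def)
qed (use assms in simp)

lemma indicator_ball_r0_Lp: "indicator (ball_a r0) \<in> Lp_fun M p"
proof (rule Lp_funI)
  show "indicator (ball_a r0) \<in> borel_measurable M" using ball_a_sets[OF r0_pos] by measurable
  have "integrable M (indicator (ball_a r0) :: 'a \<Rightarrow> real)"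
    using ball_r0_finite ball_a_sets[OF r0_pos] by (simp add: integrable_real_indicator)
  moreover have "(\<lambda>x. \<bar>indicator (ball_a r0) x :: real\<bar> powr p) = indicator (ball_a r0)"
    using p_pos by (auto simp: indicator_def)
  ultimately show "integrable M (\<lambda>x. \<bar>indicator (ball_a r0) x :: real\<bar> powr p)" by simp
qed

lemma gap_Lp: "h \<in> Lp_fun M p \<Longrightarrow> gap h \<in> Lp_fun M p"
proof -
  assume h: "h \<in> Lp_fun M p"
  have "(\<lambda>x. h x * indicator (ball_a r0) x) \<in> Lp_fun M p"
    using h Lp_fun_measurable[OF h] ball_a_sets[OF r0_pos]
    by (intro Lp_fun_dominated[OF h]) (auto simp: indicator_def)
  from Lp_fun_diff[OF indicator_ball_r0_Lp this] show ?thesis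
    by (simp add: gap_def[abs_def] algebra_simps)
qed

lemma gap_near_integrand_Lp:
  assumes h: "h \<in> Lp_fun M p"
  shows "(\<lambda>x. gap h x * indicator (ball_a (r0 / real (Suc n))) x) \<in> Lp_fun M p"
proof (rule Lp_fun_dominated[OF gap_Lp[OF h]])
  show "(\<lambda>x. gap h x * indicator (ball_a (r0 / real (Suc n))) x) \<in> borel_measurable M"
    using Lp_fun_measurable[OF gap_Lp[OF h]] by measurable
qed (auto simp: indicator_def)

lemma lift_Lp:
  assumes h: "h \<in> Lp_fun M p" and s: "1 \<le> s"
  shows "lift s h \<in> Lp_fun M p"
proof -
  have "(\<lambda>x. cutoff s x * (1 - h x)) \<in> Lp_fun M p"
  proof (rule Lp_fun_dominated[OF gap_Lp[OF h]])
    show "(\<lambda>x. cutoff s x * (1 - h x)) \<in> borel_measurable M"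
      using Lp_fun_measurable[OF h] by measurable
    show "\<bar>cutoff s x * (1 - h x)\<bar> \<le> \<bar>gap h x\<bar>" if "x \<in> space M" for x
      using cutoff_eq_0_outside[OF s that] cutoff_bounds[of s x]
      by (cases "x \<in> ball_a r0") (auto simp: gap_def abs_mult mult_left_le_one_le)
  qed
  from Lp_fun_add[OF h this] show ?thesis by (simp add: lift_def[abs_def])
qed

lemma Lp_norm_lift_diff_le_gap_near:
  assumes h: "h \<in> Lp_fun M p" and s: "real (Suc n) \<le> s"
  shows "Lp_norm M p (\<lambda>x. lift s h x - h x) \<le> gap_near n h"
  unfolding gap_near_def
proof (rule Lp_norm_mono[OF gap_near_integrand_Lp[OF h]])
  have s1: "1 \<le> s" using s by simp
  show "(\<lambda>x. lift s h x - h x) \<in> borel_measurable M"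
    using Lp_fun_measurable[OF lift_Lp[OF h s1]] Lp_fun_measurable[OF h] by measurable
  fix x assume x: "x \<in> space M"
  show "\<bar>lift s h x - h x\<bar> \<le> \<bar>gap h x * indicator (ball_a (r0 / real (Suc n))) x\<bar>"
  proof (cases "x \<in> ball_a (r0 / real (Suc n))")
    case True
    moreover have "r0 / real (Suc n) \<le> r0" using r0_pos by (simp add: divide_le_eq)
    ultimately have "x \<in> ball_a r0" by (auto simp: mball_of_def)
    with True show ?thesis
      using cutoff_bounds[of s x] by (simp add: lift_def gap_def abs_mult mult_left_le_one_le)
  next
    case False
    have "r0 / s \<le> r0 / real (Suc n)" using s r0_pos by (intro divide_left_mono) auto
    then have "cutoff s x = 0" using False x s1 by (intro cutoff_eq_0) (auto simp: mball_of_def)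
    then show ?thesis by (simp add: lift_def)
  qed
qed

lemma Lp_norm_lift_diff_lift:
  assumes h: "h \<in> Lp_fun M p" and h': "h' \<in> Lp_fun M p" and s: "1 \<le> s" and t: "1 \<le> t"
  shows "Lp_norm M p (\<lambda>x. lift s h x - lift t h' x)
    \<le> Lp_norm M p (\<lambda>x. h x - h' x) + \<bar>s - t\<bar> * Lp_norm M p (gap h')"
proof -
  define u where "u x = (1 - cutoff s x) * (h x - h' x)" for x
  define v where "v x = (cutoff s x - cutoff t x) * (1 - h' x)" for x
  have u_meas: "u \<in> borel_measurable M"
    unfolding u_def[abs_def] using Lp_fun_measurable[OF h] Lp_fun_measurable[OF h'] by measurable
  have v_meas: "v \<in> borel_measurable M"
    unfolding v_def[abs_def] using Lp_fun_measurable[OF h'] by measurable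
  have u_le: "\<bar>u x\<bar> \<le> \<bar>h x - h' x\<bar>" for x
    using cutoff_bounds[of s x] by (simp add: u_def abs_mult mult_left_le_one_le)
  have v_le: "\<bar>v x\<bar> \<le> \<bar>\<bar>s - t\<bar> * gap h' x\<bar>" if x: "x \<in> space M" for x
  proof (cases "x \<in> ball_a r0")
    case True
    then show ?thesis using cutoff_Lipschitz[of s x t] by (simp add: v_def gap_def abs_mult mult_right_mono)
  next
    case False
    then show ?thesis using cutoff_eq_0_outside[OF s x False] cutoff_eq_0_outside[OF t x False]
      by (simp add: v_def)
  qed
  have u_Lp: "u \<in> Lp_fun M p" by (rule Lp_fun_dominated[OF Lp_fun_diff[OF h h'] u_meas u_le])
  have v_Lp: "v \<in> Lp_fun M p" by (rule Lp_fun_dominated[OF Lp_fun_cmult[OF gap_Lp[OF h']] v_meas v_le])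
  have "(\<lambda>x. lift s h x - lift t h' x) = (\<lambda>x. u x + v x)"
    by (simp add: lift_def u_def v_def algebra_simps)
  then have "Lp_norm M p (\<lambda>x. lift s h x - lift t h' x) \<le> Lp_norm M p u + Lp_norm M p v"
    using Lp_norm_triangle[OF u_Lp v_Lp] by simp
  also have "Lp_norm M p u \<le> Lp_norm M p (\<lambda>x. h x - h' x)"
    by (rule Lp_norm_mono[OF Lp_fun_diff[OF h h'] u_meas u_le])
  also have "Lp_norm M p v \<le> Lp_norm M p (\<lambda>x. \<bar>s - t\<bar> * gap h' x)"
    by (rule Lp_norm_mono[OF Lp_fun_cmult[OF gap_Lp[OF h']] v_meas v_le])
  finally show ?thesis by (simp add: Lp_norm_cmult)
qed

lemma lift_AE_eq_1:
  assumes "0 \<le> s"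
  shows "AE x in M. x \<in> ball_a (r0 / (s + 1)) \<longrightarrow> lift s h x = 1"
  using AE_not_in[OF a_null]
proof eventually_elim
  case (elim x)
  show ?case
  proof
    assume "x \<in> ball_a (r0 / (s + 1))"
    then have "cutoff s x = 1"
      using elim dist_a_pos assms by (intro cutoff_eq_1) (auto simp: mball_of_def)
    then show "lift s h x = 1" by (simp add: lift_def)
  qed
qed

lemma gap_near_antimono:
  assumes h: "h \<in> Lp_fun M p" and "m \<le> n"
  shows "gap_near n h \<le> gap_near m h"
  unfolding gap_near_def
proof (rule Lp_norm_mono[OF gap_near_integrand_Lp[OF h]])
  show "(\<lambda>x. gap h x * indicator (ball_a (r0 / real (Suc n))) x) \<in> borel_measurable M"
    using Lp_fun_measurable[OF gap_near_integrand_Lp[OF h]] .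
  have "r0 / real (Suc n) \<le> r0 / real (Suc m)" using assms(2) r0_pos by (intro divide_left_mono) auto
  then have "ball_a (r0 / real (Suc n)) \<subseteq> ball_a (r0 / real (Suc m))" by (auto simp: mball_of_def)
  then show "\<bar>gap h x * indicator (ball_a (r0 / real (Suc n))) x\<bar>
      \<le> \<bar>gap h x * indicator (ball_a (r0 / real (Suc m))) x\<bar>" for x
    by (auto simp: indicator_def)
qed

lemma gap_near_Lipschitz:
  assumes h: "h \<in> Lp_fun M p" and h': "h' \<in> Lp_fun M p"
  shows "gap_near n h \<le> gap_near n h' + Lp_norm M p (\<lambda>x. h x - h' x)"
proof -
  define v where "v x = (h' x - h x) * indicator (ball_a r0) x * indicator (ball_a (r0 / real (Suc n))) x" for x
  have v_meas: "v \<in> borel_measurable M"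
    unfolding v_def[abs_def] using Lp_fun_measurable[OF h] Lp_fun_measurable[OF h'] by measurable
  have v_le: "\<bar>v x\<bar> \<le> \<bar>h x - h' x\<bar>" for x by (auto simp: v_def indicator_def abs_minus_commute)
  have "gap_near n h = Lp_norm M p (\<lambda>x. gap h' x * indicator (ball_a (r0 / real (Suc n))) x + v x)"
    unfolding gap_near_def by (simp add: gap_def v_def algebra_simps)
  also have "\<dots> \<le> gap_near n h' + Lp_norm M p v"
    unfolding gap_near_def
    by (intro Lp_norm_triangle gap_near_integrand_Lp[OF h'] Lp_fun_dominated[OF Lp_fun_diff[OF h h'] v_meas v_le])
  also have "Lp_norm M p v \<le> Lp_norm M p (\<lambda>x. h x - h' x)"
    by (rule Lp_norm_mono[OF Lp_fun_diff[OF h h'] v_meas v_le])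
  finally show ?thesis by simp
qed

lemma eventually_not_in_ball_a:
  assumes "x \<noteq> a"
  shows "\<forall>\<^sub>F n in sequentially. x \<notin> ball_a (r0 / real (Suc n))"
proof (cases "x \<in> space M")
  case True
  then have pos: "0 < d a x" using dist_a_pos assms by simp
  obtain N where N: "r0 / d a x < real N" using reals_Archimedean2 by blast
  have "x \<notin> ball_a (r0 / real (Suc n))" if "N \<le> n" for n
  proof -
    have "r0 < real N * d a x" using N pos by (simp add: pos_divide_less_eq)
    also have "\<dots> \<le> real (Suc n) * d a x" using that pos by (intro mult_right_mono) auto
    finally have "r0 / real (Suc n) < d a x" by (simp add: pos_divide_less_eq mult.commute)
    then show ?thesis by (simp add: mball_of_def)
  qed
  then show ?thesis by (auto simp: eventually_sequentially)
qed (simp add: mball_of_def)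

text \<open>Dominated convergence: the balls shrink to the null set {a}.\<close>
lemma gap_near_small:
  assumes h: "h \<in> Lp_fun M p" and \<epsilon>: "0 < \<epsilon>"
  shows "\<exists>n. gap_near n h < \<epsilon>"
proof -
  define I where "I n x = \<bar>gap h x * indicator (ball_a (r0 / real (Suc n))) x\<bar> powr p" for n x
  have gap_meas: "gap h \<in> borel_measurable M" using gap_Lp[OF h] by (rule Lp_fun_measurable)
  have "(\<lambda>n. integral\<^sup>L M (I n)) \<longlonglongrightarrow> integral\<^sup>L M (\<lambda>x. 0)"
  proof (rule integral_dominated_convergence[where w = "\<lambda>x. \<bar>gap h x\<bar> powr p"])
    show "(\<lambda>x. 0::real) \<in> borel_measurable M" by simp
    show "I n \<in> borel_measurable M" for n unfolding I_def[abs_def] using gap_meas by measurable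
    show "integrable M (\<lambda>x. \<bar>gap h x\<bar> powr p)" using gap_Lp[OF h] by (rule Lp_fun_integrable)
    show "AE x in M. norm (I n x) \<le> \<bar>gap h x\<bar> powr p" for n
      using one_le_p by (intro AE_I2) (auto simp: I_def indicator_def intro!: powr_mono2)
    show "AE x in M. (\<lambda>n. I n x) \<longlonglongrightarrow> 0"
      using AE_not_in[OF a_null]
    proof eventually_elim
      case (elim x)
      from eventually_not_in_ball_a[of x] elim have "\<forall>\<^sub>F n in sequentially. I n x = 0"
        by (simp add: eventually_mono I_def)
      then show ?case by (rule tendsto_eventually)
    qed
  qed
  then have "\<forall>\<^sub>F n in sequentially. integral\<^sup>L M (I n) < \<epsilon> powr p"
    using \<epsilon> by (intro order_tendstoD(2)) auto
  then obtain n where n: "integral\<^sup>L M (I n) < \<epsilon> powr p"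
    by (auto simp: eventually_sequentially)
  have "gap_near n h = integral\<^sup>L M (I n) powr (1/p)" by (simp add: gap_near_def Lp_norm_def I_def[abs_def])
  also have "\<dots> < (\<epsilon> powr p) powr (1/p)"
    using n p_pos by (intro powr_less_mono2) (auto simp: I_def)
  also have "\<dots> = \<epsilon>" using p_pos \<epsilon> by (simp add: powr_powr)
  finally show ?thesis by blast
qed

lemma not_AE_eq_0_and_eq_1_near_a:
  fixes f :: "'a \<Rightarrow> real"
  assumes "0 < \<xi>" "AE x in M. x \<in> ball_a \<xi> \<longrightarrow> f x = 0" "0 < \<rho>"
  shows "\<not> (AE x in M. x \<in> ball_a \<rho> \<longrightarrow> f x = 1)"
proof
  assume "AE x in M. x \<in> ball_a \<rho> \<longrightarrow> f x = 1"
  with assms(2) have "AE x in M. x \<notin> ball_a (min \<xi> \<rho>)"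
    by eventually_elim (auto simp: mball_of_def)
  then show False using ball_a_not_null assms(1,3) by simp
qed

lemma continuous_map_gap_near:
  "continuous_map Lp.mtopology euclideanreal (\<lambda>F. gap_near n (SOME f. f \<in> F))"
proof (rule Lp.continuous_map_real_Lipschitz1)
  fix F G assume "F \<in> Lp_space M p" "G \<in> Lp_space M p"
  then show "gap_near n (SOME f. f \<in> F) \<le> gap_near n (SOME f. f \<in> G) + Lp_dist M p F G"
    unfolding Lp_dist_def by (intro gap_near_Lipschitz Lp_space_some(2))
qed

lemma continuous_map_Lp_class_lift:
  assumes h: "\<And>x. x \<in> topspace X \<Longrightarrow> h x \<in> Lp_fun M p"
    and h_cont: "continuous_map X Lp.mtopology (\<lambda>x. Lp_class M p (h x))"
    and S: "continuous_map X euclideanreal S" and S1: "\<And>x. x \<in> topspace X \<Longrightarrow> 1 \<le> S x"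
  shows "continuous_map X Lp.mtopology (\<lambda>x. Lp_class M p (lift (S x) (h x)))"
  unfolding Lp.continuous_map_to_metric
proof (intro ballI allI impI)
  fix x0 and \<epsilon> :: real assume x0: "x0 \<in> topspace X" and \<epsilon>: "0 < \<epsilon>"
  define C where "C = Lp_norm M p (gap (h x0))"
  have C: "0 \<le> C" by (simp add: C_def Lp_norm_nonneg)
  obtain U where U: "openin X U" "x0 \<in> U"
    and U_close: "\<And>y. y \<in> U \<Longrightarrow> Lp_class M p (h y) \<in> Lp.mball (Lp_class M p (h x0)) (\<epsilon> / 2)"
    using h_cont[unfolded Lp.continuous_map_to_metric] x0 \<epsilon> by (meson half_gt_zero)
  define V where "V = {y \<in> topspace X. S y \<in> ball (S x0) (\<epsilon> / (2 * (C + 1)))}"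
  have V: "openin X V"
    unfolding V_def by (rule openin_continuous_map_preimage[OF S]) simp
  have "x0 \<in> V" using x0 \<epsilon> C by (simp add: V_def)
  show "\<exists>W. openin X W \<and> x0 \<in> W \<and> (\<forall>y\<in>W. Lp_class M p (lift (S y) (h y))
      \<in> Lp.mball (Lp_class M p (lift (S x0) (h x0))) \<epsilon>)"
  proof (intro exI[of _ "U \<inter> V"] conjI ballI)
    show "openin X (U \<inter> V)" "x0 \<in> U \<inter> V" using U V \<open>x0 \<in> V\<close> by auto
    fix y assume y: "y \<in> U \<inter> V"
    then have yX: "y \<in> topspace X" by (simp add: V_def)
    have "Lp_dist M p (Lp_class M p (lift (S x0) (h x0))) (Lp_class M p (lift (S y) (h y)))
        = Lp_norm M p (\<lambda>x. lift (S y) (h y) x - lift (S x0) (h x0) x)"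
      using Lp.commute Lp_dist_Lp_class[OF lift_Lp[OF h[OF yX] S1[OF yX]] lift_Lp[OF h[OF x0] S1[OF x0]]]
      by simp
    also have "\<dots> \<le> Lp_norm M p (\<lambda>x. h y x - h x0 x) + \<bar>S y - S x0\<bar> * C"
      unfolding C_def by (rule Lp_norm_lift_diff_lift[OF h[OF yX] h[OF x0] S1[OF yX] S1[OF x0]])
    also have "Lp_norm M p (\<lambda>x. h y x - h x0 x) < \<epsilon> / 2"
      using U_close[of y] y Lp.commute Lp_dist_Lp_class[OF h[OF yX] h[OF x0]] by auto
    also have "\<bar>S y - S x0\<bar> * C \<le> \<epsilon> / (2 * (C + 1)) * C"
      using y C by (intro mult_right_mono) (auto simp: V_def dist_real_def abs_minus_commute)
    also have "\<dots> \<le> \<epsilon> / 2" using C \<epsilon> by (simp add: field_simps)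
    finally show "Lp_class M p (lift (S y) (h y)) \<in> Lp.mball (Lp_class M p (lift (S x0) (h x0))) \<epsilon>"
      using Lp_class_in_Lp_space lift_Lp h S1 yX x0 by simp
  qed
qed

lemma Lp_dist_Lp_class_lift_less:
  assumes h: "h \<in> Lp_fun M p" and s: "real (Suc n) \<le> s" and gap: "gap_near n h < \<epsilon>"
  shows "Lp_dist M p (Lp_class M p h) (Lp_class M p (lift s h)) < \<epsilon>"
proof -
  have "Lp_dist M p (Lp_class M p h) (Lp_class M p (lift s h)) = Lp_norm M p (\<lambda>x. lift s h x - h x)"
    using s Lp_dist_Lp_class[OF h lift_Lp[OF h]] by (simp add: Lp_norm_def abs_minus_commute)
  also have "\<dots> \<le> gap_near n h" by (rule Lp_norm_lift_diff_le_gap_near[OF h s])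
  finally show ?thesis using gap by simp
qed

lemma Lp_class_lift_AE_eq_1:
  assumes "0 \<le> s" "f \<in> Lp_class M p (lift s h)"
  shows "AE x in M. x \<in> ball_a (r0 / (s + 1)) \<longrightarrow> f x = 1"
proof -
  have "AE x in M. f x = lift s h x" using assms(2) by (simp add: Lp_class_def)
  with lift_AE_eq_1[OF assms(1)] show ?thesis by eventually_elim simp
qed

text \<open>The perturbation is x \<mapsto> [lift (S x) h_x] with h_x a representative of g x, where the
  continuous index S is so large that 1 - h_x has norm below \<delta> x on B(a, r0/S x).\<close>
lemma continuous_perturbation_eq_1_near_a:
  assumes g: "continuous_map X Lp.mtopology g"
    and \<delta>: "continuous_map X euclideanreal \<delta>" and \<delta>_pos: "\<And>x. x \<in> topspace X \<Longrightarrow> 0 < \<delta> x"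
  obtains \<Phi> where "continuous_map X Lp.mtopology \<Phi>"
    "\<And>x. x \<in> topspace X \<Longrightarrow> Lp_dist M p (g x) (\<Phi> x) < \<delta> x"
    "\<And>x. x \<in> topspace X \<Longrightarrow> \<exists>\<rho>>0. \<forall>f\<in>\<Phi> x. AE y in M. y \<in> ball_a \<rho> \<longrightarrow> f y = 1"
proof -
  define h where "h x = (SOME f. f \<in> g x)" for x
  have "g x \<in> Lp_space M p" if "x \<in> topspace X" for x
    using continuous_map_image_subset_topspace[OF g] that by auto
  then have hL: "h x \<in> Lp_fun M p" and g_eq: "Lp_class M p (h x) = g x" if "x \<in> topspace X" for x
    using Lp_space_some(2,3) that by (simp_all add: h_def)
  have e_cont: "continuous_map X euclideanreal (\<lambda>x. gap_near n (h x))" for n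
    using continuous_map_compose[OF g continuous_map_gap_near] by (simp add: o_def h_def)
  obtain S where S: "continuous_map X euclideanreal S"
    and S_index: "\<And>x. x \<in> topspace X \<Longrightarrow> \<exists>n. real (Suc n) \<le> S x \<and> gap_near n (h x) < \<delta> x"
  proof (rule continuous_map_index_bound[OF e_cont _ _ \<delta> \<delta>_pos])
    show "gap_near n (h x) \<le> gap_near m (h x)" if "x \<in> topspace X" "m \<le> n" for x m n
      using gap_near_antimono[OF hL[OF that(1)] that(2)] .
    show "\<exists>n. gap_near n (h x) < \<epsilon>" if "x \<in> topspace X" "0 < \<epsilon>" for x \<epsilon>
      using gap_near_small[OF hL[OF that(1)] that(2)] .
  qed auto
  have S1: "1 \<le> S x" if "x \<in> topspace X" for x
    using S_index[OF that] by force
  show ?thesis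
  proof (rule that[of "\<lambda>x. Lp_class M p (lift (S x) (h x))"])
    have "continuous_map X Lp.mtopology (\<lambda>x. Lp_class M p (h x))"
      using continuous_map_eq[OF g] g_eq by metis
    from continuous_map_Lp_class_lift[OF hL this S S1]
    show "continuous_map X Lp.mtopology (\<lambda>x. Lp_class M p (lift (S x) (h x)))" .
  next
    fix x assume x: "x \<in> topspace X"
    then show "Lp_dist M p (g x) (Lp_class M p (lift (S x) (h x))) < \<delta> x"
      using S_index[OF x] Lp_dist_Lp_class_lift_less[OF hL[OF x]] g_eq[OF x] by metis
    show "\<exists>\<rho>>0. \<forall>f\<in>Lp_class M p (lift (S x) (h x)). AE y in M. y \<in> ball_a \<rho> \<longrightarrow> f y = 1"
      using r0_pos S1[OF x] Lp_class_lift_AE_eq_1[of "S x"] by (intro exI[of _ "r0 / (S x + 1)"]) auto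
  qed
qed

lemma continuous_perturbation_off_vanishing_near_a:
  assumes A: "A \<subseteq> Lp_space M p" and \<xi>: "\<And>F. F \<in> A \<Longrightarrow> 0 < \<xi> F"
    and vanish: "\<And>F f. F \<in> A \<Longrightarrow> f \<in> F \<Longrightarrow> AE x in M. x \<in> ball_a (\<xi> F) \<longrightarrow> f x = 0"
    and g: "continuous_map X Lp.mtopology g"
    and \<delta>: "continuous_map X euclideanreal \<delta>" "\<And>x. x \<in> topspace X \<Longrightarrow> 0 < \<delta> x"
  shows "\<exists>\<Phi>. continuous_map X Lp.mtopology \<Phi> \<and>
    (\<forall>x\<in>topspace X. Lp_dist M p (g x) (\<Phi> x) < \<delta> x \<and> \<Phi> x \<notin> A)"
proof -
  obtain \<Phi> where \<Phi>: "continuous_map X Lp.mtopology \<Phi>"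
    and close: "\<And>x. x \<in> topspace X \<Longrightarrow> Lp_dist M p (g x) (\<Phi> x) < \<delta> x"
    and one: "\<And>x. x \<in> topspace X \<Longrightarrow> \<exists>\<rho>>0. \<forall>f\<in>\<Phi> x. AE y in M. y \<in> ball_a \<rho> \<longrightarrow> f y = 1"
    using continuous_perturbation_eq_1_near_a[OF g \<delta>] by blast
  have "\<Phi> x \<notin> A" if x: "x \<in> topspace X" for x
  proof
    assume \<Phi>A: "\<Phi> x \<in> A"
    then have "(SOME f. f \<in> \<Phi> x) \<in> \<Phi> x" using A by (intro Lp_space_some(1)) auto
    then show False
      using one[OF x] not_AE_eq_0_and_eq_1_near_a[OF \<xi>[OF \<Phi>A] vanish[OF \<Phi>A]] by blast
  qed
  then show ?thesis using \<Phi> close by blast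
qed

end

theorem mainTheorem5:
  fixes M :: "'a measure" and d :: "'a \<Rightarrow> 'a \<Rightarrow> real" and p :: real
    and a :: 'a and A B :: "('a \<Rightarrow> real) set set" and \<xi> :: "('a \<Rightarrow> real) set \<Rightarrow> real"
  assumes "Metric_space (space M) d"
    and "1 \<le> p"
    and "a \<in> X0 M"
    and "\<And>r. r > 0 \<Longrightarrow> mball_of M d a r \<in> sets M \<and> emeasure M (mball_of M d a r) > 0"
    and "\<exists>r'>0. emeasure M (mball_of M d a r') < \<infinity>"
    and "A \<subseteq> Lp_space M p"
    and "\<And>F. F \<in> A \<Longrightarrow> \<xi> F > 0"
    and "\<And>F f. F \<in> A \<Longrightarrow> f \<in> F \<Longrightarrow> AE x in M. x \<in> mball_of M d a (\<xi> F) \<longrightarrow> f x = 0"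
    and "Z_set (Lp_topology M p) B"
    and "closedin (Lp_topology M p) (A \<union> B)"
  shows "Z_set (Lp_topology M p) (A \<union> B)"
proof -
  obtain r0 where "r0 > 0" "emeasure M (mball_of M d a r0) < \<infinity>" using assms(5) by blast
  then interpret Lp_nonatomic_point M p d a r0
    using assms(1-4)
    by (intro Lp_nonatomic_point.intro Lp_exponent.intro Lp_nonatomic_point_axioms.intro) auto
  have "Z_set Lp.mtopology (A \<union> B)"
  proof (rule Lp.Z_set_Un_if_perturbable)
    show "Z_set Lp.mtopology B" "closedin Lp.mtopology (A \<union> B)"
      using assms(9,10) by (simp_all add: Lp_topology_def)
    fix g \<delta> assume "continuous_map Lp.mtopology Lp.mtopology g"
      "continuous_map Lp.mtopology euclideanreal \<delta>" "\<And>F. F \<in> Lp_space M p \<Longrightarrow> 0 < \<delta> F"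
    from continuous_perturbation_off_vanishing_near_a[of A \<xi>, OF assms(6-8) this]
    show "\<exists>\<Phi>. continuous_map Lp.mtopology Lp.mtopology \<Phi> \<and>
        (\<forall>F\<in>Lp_space M p. Lp_dist M p (g F) (\<Phi> F) < \<delta> F \<and> \<Phi> F \<notin> A)"
      by (simp only: Lp.topspace_mtopology)
  qed
  then show ?thesis by (simp add: Lp_topology_def)
qed

end
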